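(* Fix $\rho\in(-1,1)$, real numbers $\mu_D$, $\sigma_D>0$, $\mu_L\ge0$, $\sigma_L>0$ and an integer $n\ge1$. Then the function $m\mapsto B_m(\rho)$ (with $B_m$ the function defined in the context, with lead-time forecast window $m$) is strictly decreasing on the positive integers $m\ge1$.
   Context: For fixed real parameters $\mu_D$, $\sigma_D>0$, $\mu_L\ge0$, $\sigma_L\ge0$ and integers $n,m\ge1$, define for $\rho\in(-1,1)$ $$B_m(\rho)=\frac{2\sigma_L^2}{n^2m^2}\left(m(1-\rho^n)+\frac{n(1+\rho)}{1-\rho}-\frac{(1+\rho^2)(1-\rho^n)}{(1-\rho)^2}\right)+\frac{2\sigma_L^2\mu_D^2}{\sigma_D^2 m^2}+\left(\frac{2\mu_L^2}{n^2}+\frac{2\mu_L}{n}\right)(1-\rho^n)+1 .$$ (This is the bullwhip measure $\operatorname{Var}q_t/\operatorname{Var}D_t$ for AR(1) demand with autocorrelation $\rho$, mean $\mu_D$ and variance $\sigma_D^2$, i.i.d. lead times with mean $\mu_L$ and variance $\sigma_L^2$, moving-average demand forecast over $n$ periods and moving-average lead-time forecast over $m$ periods, under the order-up-to policy.) *)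

theory Defs
  imports Complex_Main
begin

text \<open>Bullwhip measure B_m(rho) for AR(1) demand, MA(n) demand forecast and MA(m)
  lead-time forecast, as defined in the paper context.\<close>
definition bullwhip ::
  "real \<Rightarrow> real \<Rightarrow> real \<Rightarrow> real \<Rightarrow> nat \<Rightarrow> nat \<Rightarrow> real \<Rightarrow> real" where
  "bullwhip \<mu>D \<sigma>D \<mu>L \<sigma>L n m \<rho> =
     2 * \<sigma>L^2 / (real n ^ 2 * real m ^ 2) *
       (real m * (1 - \<rho> ^ n) + real n * (1 + \<rho>) / (1 - \<rho>)
        - (1 + \<rho>^2) * (1 - \<rho> ^ n) / (1 - \<rho>)^2)
     + 2 * \<sigma>L^2 * \<mu>D^2 / (\<sigma>D^2 * real m ^ 2)
     + (2 * \<mu>L^2 / real n ^ 2 + 2 * \<mu>L / real n) * (1 - \<rho> ^ n) + 1"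

end

theory Submission
  imports Defs
begin

text \<open>For fixed \<rho> the bullwhip measure has the shape \<open>B\<^sub>m = a / m + b / m\<^sup>2 + c\<close> with
  \<open>a = 2\<sigma>\<^sub>L\<^sup>2 (1 - \<rho>\<^sup>n) / n\<^sup>2 > 0\<close>. Such a function decreases from \<open>m\<close> to \<open>m + 1\<close> for every
  \<open>m \<ge> 1\<close> as soon as it does so from \<open>1\<close> to \<open>2\<close>, i.e. as soon as \<open>2a + 3b > 0\<close>.
  The \<open>\<sigma>\<^sub>D, \<mu>\<^sub>D\<close>-term of \<open>b\<close> is nonnegative, and after clearing the denominator \<open>(1 - \<rho>)\<^sup>2\<close>
  the remaining part of \<open>2a + 3b\<close> becomes \<open>3n(1 - \<rho>\<^sup>2) - (1 - \<rho>\<^sup>n)(1 + 4\<rho> + \<rho>\<^sup>2)\<close>, which is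
  positive because \<open>0 < 1 - \<rho>\<^sup>n \<le> n(1 - \<rho>)\<close>.\<close>

lemma one_minus_power_pos:
  fixes x :: real
  assumes "\<bar>x\<bar> < 1" and "n \<ge> 1"
  shows "0 < 1 - x ^ n"
proof -
  have "\<bar>x ^ n\<bar> < 1"
    using assms by (simp add: power_abs power_less_one_iff)
  then show ?thesis by linarith
qed

lemma one_minus_power_le:
  fixes x :: real
  assumes "\<bar>x\<bar> \<le> 1"
  shows "1 - x ^ n \<le> real n * (1 - x)"
proof -
  have "(\<Sum>i<n. x ^ i) \<le> (\<Sum>i<n. 1)"
  proof (rule sum_mono)
    fix i
    have "\<bar>x\<bar> ^ i \<le> 1"
      using assms by (simp add: power_le_one)
    then show "x ^ i \<le> 1"
      by (metis abs_ge_self order_trans power_abs)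
  qed
  then have "(1 - x) * (\<Sum>i<n. x ^ i) \<le> (1 - x) * real n"
    using assms by (intro mult_left_mono) auto
  then show ?thesis
    by (simp add: one_diff_power_eq mult.commute)
qed

lemma power_bound_quadratic_pos:
  fixes x :: real
  assumes "\<bar>x\<bar> < 1" and "n \<ge> 1"
  shows "0 < 3 * real n * (1 - x\<^sup>2) - (1 - x ^ n) * (1 + 4 * x + x\<^sup>2)"
proof (cases "1 + 4 * x + x\<^sup>2 > 0")
  case True
  have "(1 - x ^ n) * (1 + 4 * x + x\<^sup>2) \<le> real n * (1 - x) * (1 + 4 * x + x\<^sup>2)"
    using one_minus_power_le[of x n] assms True by (intro mult_right_mono) auto
  moreover have "3 * real n * (1 - x\<^sup>2) - real n * (1 - x) * (1 + 4 * x + x\<^sup>2)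
      = real n * (1 - x)\<^sup>2 * (2 + x)"
    by (simp add: algebra_simps power2_eq_square)
  moreover have "0 < real n * (1 - x)\<^sup>2 * (2 + x)"
    using assms by simp
  ultimately show ?thesis by linarith
next
  case False
  then have "(1 - x ^ n) * (1 + 4 * x + x\<^sup>2) \<le> 0"
    using one_minus_power_pos[OF assms] by (intro mult_nonneg_nonpos) auto
  moreover have "0 < 3 * real n * (1 - x\<^sup>2)"
    using assms by (simp add: abs_square_less_1)
  ultimately show ?thesis by linarith
qed

lemma inverse_quadratic_Suc_less:
  fixes a b M :: real
  assumes "0 \<le> a" and "0 < 2 * a + 3 * b" and "1 \<le> M"
  shows "a / (M + 1) + b / (M + 1)\<^sup>2 < a / M + b / M\<^sup>2"
proof -
  \<comment> \<open>three times the numerator of the difference of the two sides\<close>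
  have "0 < a * ((M - 1) * (3 * M + 2)) + (2 * M + 1) * (2 * a + 3 * b)"
    using assms by (intro add_nonneg_pos) auto
  then have "0 < a * (M * (M + 1)) + b * (2 * M + 1)"
    by (simp add: algebra_simps)
  then have "0 < (a * (M * (M + 1)) + b * (2 * M + 1)) / (M\<^sup>2 * (M + 1)\<^sup>2)"
    using assms by simp
  also have "\<dots> = a / M + b / M\<^sup>2 - (a / (M + 1) + b / (M + 1)\<^sup>2)"
    using assms by (simp add: divide_simps power2_eq_square) (simp add: algebra_simps)
  finally show ?thesis by simp
qed

lemma bullwhip_eq:
  "bullwhip \<mu>D \<sigma>D \<mu>L \<sigma>L n m \<rho> =
     2 * \<sigma>L\<^sup>2 / real n ^ 2 * (1 - \<rho> ^ n) / real m
     + (2 * \<sigma>L\<^sup>2 / real n ^ 2 * (real n * (1 + \<rho>) / (1 - \<rho>)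
          - (1 + \<rho>\<^sup>2) * (1 - \<rho> ^ n) / (1 - \<rho>)\<^sup>2)
        + 2 * \<sigma>L\<^sup>2 * \<mu>D\<^sup>2 / \<sigma>D\<^sup>2) / real m ^ 2
     + ((2 * \<mu>L\<^sup>2 / real n ^ 2 + 2 * \<mu>L / real n) * (1 - \<rho> ^ n) + 1)"
proof -
  have split: "A * (M * t + K1 - K2) / (N * M\<^sup>2) = A * t / (N * M) + A * (K1 - K2) / (N * M\<^sup>2)"
    for A N M t K1 K2 :: real
    by (cases "M = 0"; cases "N = 0") (simp_all add: field_simps power2_eq_square)
  show ?thesis
    by (simp add: bullwhip_def split add_divide_distrib)
qed

lemma bullwhip_coefficient_pos:
  fixes \<rho> :: real
  assumes "\<bar>\<rho>\<bar> < 1" and "n \<ge> 1"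
  shows "0 < 2 * (1 - \<rho> ^ n)
    + 3 * (real n * (1 + \<rho>) / (1 - \<rho>) - (1 + \<rho>\<^sup>2) * (1 - \<rho> ^ n) / (1 - \<rho>)\<^sup>2)"
    (is "0 < ?c")
proof -
  have clear: "(2 * t + 3 * (A / d - B / d\<^sup>2)) * d\<^sup>2 = 2 * t * d\<^sup>2 + 3 * A * d - 3 * B"
    if "d \<noteq> 0" for t A B d :: real
    using that by (simp add: field_simps power2_eq_square)
  have "1 - \<rho> \<noteq> 0"
    using assms by simp
  then have "?c * (1 - \<rho>)\<^sup>2 = 3 * real n * (1 - \<rho>\<^sup>2) - (1 - \<rho> ^ n) * (1 + 4 * \<rho> + \<rho>\<^sup>2)"
    unfolding clear[OF \<open>1 - \<rho> \<noteq> 0\<close>] by (simp add: algebra_simps power2_eq_square)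
  then have "0 < ?c * (1 - \<rho>)\<^sup>2"
    using power_bound_quadratic_pos[OF assms] by simp
  then show ?thesis
    by (simp add: zero_less_mult_iff)
qed

lemma bullwhip_Suc_less:
  fixes \<rho> \<mu>D \<sigma>D \<mu>L \<sigma>L :: real and n m :: nat
  assumes "\<bar>\<rho>\<bar> < 1" and "\<sigma>L \<noteq> 0" and "n \<ge> 1" and "m \<ge> 1"
  shows "bullwhip \<mu>D \<sigma>D \<mu>L \<sigma>L n (Suc m) \<rho> < bullwhip \<mu>D \<sigma>D \<mu>L \<sigma>L n m \<rho>"
proof -
  define \<alpha> where "\<alpha> = 2 * \<sigma>L\<^sup>2 / real n ^ 2"
  define K where "K = real n * (1 + \<rho>) / (1 - \<rho>) - (1 + \<rho>\<^sup>2) * (1 - \<rho> ^ n) / (1 - \<rho>)\<^sup>2"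
  define \<beta> where "\<beta> = 2 * \<sigma>L\<^sup>2 * \<mu>D\<^sup>2 / \<sigma>D\<^sup>2"
  have "0 < \<alpha>"
    using assms by (simp add: \<alpha>_def)
  have "0 < 1 - \<rho> ^ n"
    using one_minus_power_pos assms by blast
  have "0 < \<alpha> * (2 * (1 - \<rho> ^ n) + 3 * K) + 3 * \<beta>"
    using bullwhip_coefficient_pos[OF assms(1,3)] \<open>0 < \<alpha>\<close>
    by (intro add_pos_nonneg) (simp_all add: K_def \<beta>_def)
  then have "\<alpha> * (1 - \<rho> ^ n) / (real m + 1) + (\<alpha> * K + \<beta>) / (real m + 1)\<^sup>2
      < \<alpha> * (1 - \<rho> ^ n) / real m + (\<alpha> * K + \<beta>) / (real m)\<^sup>2"
    using inverse_quadratic_Suc_less[of "\<alpha> * (1 - \<rho> ^ n)" "\<alpha> * K + \<beta>" "real m"]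
      \<open>0 < \<alpha>\<close> \<open>0 < 1 - \<rho> ^ n\<close> \<open>m \<ge> 1\<close>
    by (simp add: algebra_simps)
  then show ?thesis
    by (subst (1 2) bullwhip_eq) (simp add: \<alpha>_def K_def \<beta>_def add.commute)
qed

theorem mainTheorem9:
  fixes \<rho> \<mu>D \<sigma>D \<mu>L \<sigma>L :: real and n :: nat
  assumes "-1 < \<rho>" and "\<rho> < 1"
    and "\<sigma>D > 0" and "\<mu>L \<ge> 0" and "\<sigma>L > 0" and "n \<ge> 1"
  shows "strict_antimono_on {1..} (\<lambda>m::nat. bullwhip \<mu>D \<sigma>D \<mu>L \<sigma>L n m \<rho>)"
proof (rule monotone_onI)
  fix a b :: nat
  assume "a \<in> {1..}" and "a < b"
  have "\<bar>\<rho>\<bar> < 1" and "\<sigma>L \<noteq> 0"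
    using assms by auto
  have "- bullwhip \<mu>D \<sigma>D \<mu>L \<sigma>L n a \<rho> < - bullwhip \<mu>D \<sigma>D \<mu>L \<sigma>L n b \<rho>"
  proof (rule lift_Suc_mono_less_ivl[where N = "{1..}"])
    show "- bullwhip \<mu>D \<sigma>D \<mu>L \<sigma>L n m \<rho> < - bullwhip \<mu>D \<sigma>D \<mu>L \<sigma>L n (Suc m) \<rho>"
      if "m \<in> {1..}" for m
      using bullwhip_Suc_less[OF \<open>\<bar>\<rho>\<bar> < 1\<close> \<open>\<sigma>L \<noteq> 0\<close> \<open>n \<ge> 1\<close>] that by simp
  qed (use \<open>a \<in> {1..}\<close> \<open>a < b\<close> in auto)
  then show "bullwhip \<mu>D \<sigma>D \<mu>L \<sigma>L n b \<rho> < bullwhip \<mu>D \<sigma>D \<mu>L \<sigma>L n a \<rho>"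
    by simp
qed

end
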